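(* Let $G$ be a finite abelian group, $M$ a $\hat G$-linear, left inductive monoid, $e$ a non-zero idempotent of $M$ with $\mathcal J$-class $J$. Then for every $W\in\mathrm{Rep}(\hat G_J,\hat G)$, $W{\uparrow_e}$ is a $\hat G$-linear representation of $M$ (an object of $\mathrm{Rep}(M,\hat G)$) under the action $a(x\otimes w)=(ax)\otimes w$.
   Context: $\hat G=G\sqcup\{0\}$ with $0$ absorbing. $\mathrm{Vect}_{\hat G}$: objects are finite pointed sets with an action of $\hat G$ ($0v=0$, $g0=0$) such that $G$ acts freely on nonzero elements; morphisms $f$ satisfy $f(0)=0$, $f(gv)=gf(v)$, $f(v_1)=f(v_2)\neq0\Rightarrow Gv_1=Gv_2$. A $\hat G$-linear monoid is a finite monoid $M$ with absorbing element $0_M$ containing $G$ as a subgroup of units commuting with all of $M$, with $G$ acting freely by translation on $M\setminus\{0_M\}$. $\mathrm{Rep}(M,\hat G)$: objects of $\mathrm{Vect}_{\hat G}$ with an $M$-action by morphisms of $\mathrm{Vect}_{\hat G}$, $0_M$ acting as zero and $g\in G$ as the scalar $g$. For $a\in M$: $J(a)=MaM$, $\mathcal J_a$ its $\mathcal J$-class ($a\sim b\iff J(a)=J(b)$), $I(a)=\{x\in J(a):MxM\neq J(a)\}$, $P(a)=(J(a)\setminus I(a))\cup\{0\}$ with product $xy$ if in $J(a)\setminus I(a)$ and $0$ otherwise; $M$ acts on $P(a)$ by left translation the same way. $M$ is left inductive if $P(e)$ is an object of $\mathrm{Rep}(M,\hat G)$ under left translation for every idempotent $e$. $G_J=eMe\cap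 J$ (a group with identity $e$), $\hat G_J=G_J\sqcup\{0\}$; $\mathrm{Rep}(\hat G_J,\hat G)$ consists of objects of $\mathrm{Vect}_{\hat G}$ with an action of $\hat G_J$ by morphisms of $\mathrm{Vect}_{\hat G}$, with $e$ acting as identity, $0$ as zero and $ge$ as the scalar $g$. $P(e)e=\{xe:x\in P(e)\}$. $W{\uparrow_e}=P(e)e\otimes_{\hat G_J}W$ is the set of symbols $x\otimes w$ ($x\in P(e)e$, $w\in W$) modulo the equivalence relation generated by $x\alpha\otimes w=x\otimes\alpha w$ ($\alpha\in\hat G_J$), $gx\otimes w=x\otimes gw$ ($g\in G$), and $x\otimes0=0\otimes w$; $G$ acts by $g(x\otimes w)=(gx)\otimes w$, and $ax$ denotes the product in $P(e)$. *)

theory Defs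
  imports "HOL-Algebra.Group"
begin

text \<open>An object is a finite pointed set (V, z) with an action of G; the extra element 0 of
  hat G acts as the constant map to the base point z.  G must fix z and act freely on V - {z}.\<close>

definition vect_obj :: "('g,'c) monoid_scheme \<Rightarrow> 'v set \<Rightarrow> 'v \<Rightarrow> ('g \<Rightarrow> 'v \<Rightarrow> 'v) \<Rightarrow> bool" where
  "vect_obj G V z act \<longleftrightarrow> finite V \<and> z \<in> V \<and>
     (\<forall>g\<in>carrier G. \<forall>v\<in>V. act g v \<in> V) \<and>
     (\<forall>v\<in>V. act \<one>\<^bsub>G\<^esub> v = v) \<and>
     (\<forall>g\<in>carrier G. \<forall>h\<in>carrier G. \<forall>v\<in>V. act (g \<otimes>\<^bsub>G\<^esub> h) v = act g (act h v)) \<and>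
     (\<forall>g\<in>carrier G. act g z = z) \<and>
     (\<forall>g\<in>carrier G. \<forall>v\<in>V. v \<noteq> z \<longrightarrow> act g v = v \<longrightarrow> g = \<one>\<^bsub>G\<^esub>)"

definition vect_mor :: "('g,'c) monoid_scheme \<Rightarrow> 'v set \<Rightarrow> 'v \<Rightarrow> ('g \<Rightarrow> 'v \<Rightarrow> 'v) \<Rightarrow>
    'u set \<Rightarrow> 'u \<Rightarrow> ('g \<Rightarrow> 'u \<Rightarrow> 'u) \<Rightarrow> ('v \<Rightarrow> 'u) \<Rightarrow> bool" where
  "vect_mor G V z act V' z' act' f \<longleftrightarrow>
     (\<forall>v\<in>V. f v \<in> V') \<and> f z = z' \<and>
     (\<forall>g\<in>carrier G. \<forall>v\<in>V. f (act g v) = act' g (f v)) \<and>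
     (\<forall>v1\<in>V. \<forall>v2\<in>V. f v1 = f v2 \<and> f v1 \<noteq> z' \<longrightarrow>
        (\<lambda>g. act g v1) ` carrier G = (\<lambda>g. act g v2) ` carrier G)"

definition hatG_linear_monoid :: "('g,'c) monoid_scheme \<Rightarrow> ('m,'d) monoid_scheme \<Rightarrow> 'm \<Rightarrow> ('g \<Rightarrow> 'm) \<Rightarrow> bool" where
  "hatG_linear_monoid G M zM \<iota> \<longleftrightarrow> group G \<and> monoid M \<and> finite (carrier M) \<and>
     zM \<in> carrier M \<and> (\<forall>x\<in>carrier M. zM \<otimes>\<^bsub>M\<^esub> x = zM \<and> x \<otimes>\<^bsub>M\<^esub> zM = zM) \<and>
     \<iota> \<in> hom G M \<and> inj_on \<iota> (carrier G) \<and> (\<forall>g\<in>carrier G. \<iota> g \<in> Units M) \<and>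
     (\<forall>g\<in>carrier G. \<forall>x\<in>carrier M. \<iota> g \<otimes>\<^bsub>M\<^esub> x = x \<otimes>\<^bsub>M\<^esub> \<iota> g) \<and>
     (\<forall>g\<in>carrier G. \<forall>x\<in>carrier M - {zM}. \<iota> g \<otimes>\<^bsub>M\<^esub> x = x \<longrightarrow> g = \<one>\<^bsub>G\<^esub>)"

definition rep_obj :: "('g,'c) monoid_scheme \<Rightarrow> ('m,'d) monoid_scheme \<Rightarrow> 'm \<Rightarrow> ('g \<Rightarrow> 'm) \<Rightarrow>
    'v set \<Rightarrow> 'v \<Rightarrow> ('g \<Rightarrow> 'v \<Rightarrow> 'v) \<Rightarrow> ('m \<Rightarrow> 'v \<Rightarrow> 'v) \<Rightarrow> bool" where
  "rep_obj G M zM \<iota> V z act \<rho> \<longleftrightarrow> vect_obj G V z act \<and>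
     (\<forall>a\<in>carrier M. vect_mor G V z act V z act (\<rho> a)) \<and>
     (\<forall>v\<in>V. \<rho> \<one>\<^bsub>M\<^esub> v = v) \<and>
     (\<forall>a\<in>carrier M. \<forall>b\<in>carrier M. \<forall>v\<in>V. \<rho> (a \<otimes>\<^bsub>M\<^esub> b) v = \<rho> a (\<rho> b v)) \<and>
     (\<forall>v\<in>V. \<rho> zM v = z) \<and>
     (\<forall>g\<in>carrier G. \<forall>v\<in>V. \<rho> (\<iota> g) v = act g v)"

definition Jid :: "('m,'d) monoid_scheme \<Rightarrow> 'm \<Rightarrow> 'm set" where
  "Jid M a = {x \<otimes>\<^bsub>M\<^esub> a \<otimes>\<^bsub>M\<^esub> y | x y. x \<in> carrier M \<and> y \<in> carrier M}"

definition Iid :: "('m,'d) monoid_scheme \<Rightarrow> 'm \<Rightarrow> 'm set" where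
  "Iid M a = {x \<in> Jid M a. Jid M x \<noteq> Jid M a}"

definition Pset :: "('m,'d) monoid_scheme \<Rightarrow> 'm \<Rightarrow> 'm \<Rightarrow> 'm set" where
  "Pset M zM a = (Jid M a - Iid M a) \<union> {zM}"

text \<open>Product in P(a) (also the left translation action of M on P(a)).\<close>
definition pmult :: "('m,'d) monoid_scheme \<Rightarrow> 'm \<Rightarrow> 'm \<Rightarrow> 'm \<Rightarrow> 'm \<Rightarrow> 'm" where
  "pmult M zM a x y = (if x \<otimes>\<^bsub>M\<^esub> y \<in> Jid M a - Iid M a then x \<otimes>\<^bsub>M\<^esub> y else zM)"

definition left_inductive :: "('g,'c) monoid_scheme \<Rightarrow> ('m,'d) monoid_scheme \<Rightarrow> 'm \<Rightarrow> ('g \<Rightarrow> 'm) \<Rightarrow> bool" where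
  "left_inductive G M zM \<iota> \<longleftrightarrow>
     (\<forall>e\<in>carrier M. e \<otimes>\<^bsub>M\<^esub> e = e \<longrightarrow>
        rep_obj G M zM \<iota> (Pset M zM e) zM (\<lambda>g x. pmult M zM e (\<iota> g) x) (pmult M zM e))"

definition GJ :: "('m,'d) monoid_scheme \<Rightarrow> 'm \<Rightarrow> 'm set" where
  "GJ M e = {e \<otimes>\<^bsub>M\<^esub> m \<otimes>\<^bsub>M\<^esub> e | m. m \<in> carrier M} \<inter> (Jid M e - Iid M e)"

definition hatGJ :: "('m,'d) monoid_scheme \<Rightarrow> 'm \<Rightarrow> 'm \<Rightarrow> 'm set" where
  "hatGJ M zM e = GJ M e \<union> {zM}"

definition repGJ_obj :: "('g,'c) monoid_scheme \<Rightarrow> ('m,'d) monoid_scheme \<Rightarrow> 'm \<Rightarrow> ('g \<Rightarrow> 'm) \<Rightarrow> 'm \<Rightarrow>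
    'w set \<Rightarrow> 'w \<Rightarrow> ('g \<Rightarrow> 'w \<Rightarrow> 'w) \<Rightarrow> ('m \<Rightarrow> 'w \<Rightarrow> 'w) \<Rightarrow> bool" where
  "repGJ_obj G M zM \<iota> e W zW act \<sigma> \<longleftrightarrow> vect_obj G W zW act \<and>
     (\<forall>\<alpha>\<in>hatGJ M zM e. vect_mor G W zW act W zW act (\<sigma> \<alpha>)) \<and>
     (\<forall>\<alpha>\<in>hatGJ M zM e. \<forall>\<beta>\<in>hatGJ M zM e. \<forall>w\<in>W. \<sigma> (\<alpha> \<otimes>\<^bsub>M\<^esub> \<beta>) w = \<sigma> \<alpha> (\<sigma> \<beta> w)) \<and>
     (\<forall>w\<in>W. \<sigma> e w = w) \<and>
     (\<forall>w\<in>W. \<sigma> zM w = zW) \<and>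
     (\<forall>g\<in>carrier G. \<forall>w\<in>W. \<sigma> (\<iota> g \<otimes>\<^bsub>M\<^esub> e) w = act g w)"

section \<open>The induced object W\<up>e = P(e)e \<otimes> W\<close>

definition PEe :: "('m,'d) monoid_scheme \<Rightarrow> 'm \<Rightarrow> 'm \<Rightarrow> 'm set" where
  "PEe M zM e = (\<lambda>x. pmult M zM e x e) ` Pset M zM e"

definition tens_gen :: "('g,'c) monoid_scheme \<Rightarrow> ('m,'d) monoid_scheme \<Rightarrow> 'm \<Rightarrow> ('g \<Rightarrow> 'm) \<Rightarrow> 'm \<Rightarrow>
    'w set \<Rightarrow> 'w \<Rightarrow> ('g \<Rightarrow> 'w \<Rightarrow> 'w) \<Rightarrow> ('m \<Rightarrow> 'w \<Rightarrow> 'w) \<Rightarrow> (('m \<times> 'w) \<times> ('m \<times> 'w)) set" where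
  "tens_gen G M zM \<iota> e W zW act \<sigma> =
     ({((pmult M zM e x \<alpha>, w), (x, \<sigma> \<alpha> w)) | x \<alpha> w.
         x \<in> PEe M zM e \<and> \<alpha> \<in> hatGJ M zM e \<and> w \<in> W}
    \<union> {((pmult M zM e (\<iota> g) x, w), (x, act g w)) | x g w.
         x \<in> PEe M zM e \<and> g \<in> carrier G \<and> w \<in> W}
    \<union> {((x, zW), (zM, w)) | x w. x \<in> PEe M zM e \<and> w \<in> W})
    \<inter> ((PEe M zM e \<times> W) \<times> (PEe M zM e \<times> W))"

definition tens_rel where
  "tens_rel G M zM \<iota> e W zW act \<sigma> =
     (tens_gen G M zM \<iota> e W zW act \<sigma> \<union> (tens_gen G M zM \<iota> e W zW act \<sigma>)\<inverse>)\<^sup>*"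

definition tens_carrier where
  "tens_carrier G M zM \<iota> e W zW act \<sigma> = (PEe M zM e \<times> W) // tens_rel G M zM \<iota> e W zW act \<sigma>"

definition tens_zero where
  "tens_zero G M zM \<iota> e W zW act \<sigma> = tens_rel G M zM \<iota> e W zW act \<sigma> `` {(zM, zW)}"

text \<open>The actions, defined on representatives; as unions over a class these are single classes
  exactly when well defined, so the theorem below includes well-definedness.\<close>
definition tens_gact where
  "tens_gact G M zM \<iota> e W zW act \<sigma> g C =
     (\<Union>(x, w)\<in>C. tens_rel G M zM \<iota> e W zW act \<sigma> `` {(pmult M zM e (\<iota> g) x, w)})"

definition tens_mact where
  "tens_mact G M zM \<iota> e W zW act \<sigma> a C =
     (\<Union>(x, w)\<in>C. tens_rel G M zM \<iota> e W zW act \<sigma> `` {(pmult M zM e a x, w)})"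

end

theory Submission
  imports Defs
begin

(* In a finite monoid every x in the J-class J of e with x e = x has a left inverse relative to e
  (stability). Hence G_J is a group acting freely on the right of J \<inter> Me, the nonzero part of
  P(e)e, and a pair (x, w) determines the set of all its rewritings (y, \<sigma> \<alpha> w) with x = y \<alpha>.
  Two pairs are identified in W\<up>e exactly when these sets agree, and the pairs with no nonzero
  rewriting form the zero class. With this invariant the left M-action is well defined, G acts
  freely, and the orbit condition for the action of a \<in> M reduces to the orbit condition on
  P(e) supplied by left inductivity. *)

section \<open>Two-sided ideals and stability of finite monoids\<close>

lemma (in monoid) Jid_memI:
  "\<lbrakk>x \<in> carrier G; m \<in> carrier G; n \<in> carrier G\<rbrakk> \<Longrightarrow> m \<otimes> x \<otimes> n \<in> Jid G x"
  unfolding Jid_def by blast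

lemma (in monoid) Jid_subset: "x \<in> carrier G \<Longrightarrow> Jid G x \<subseteq> carrier G"
  unfolding Jid_def by auto

lemma (in monoid) Jid_self: "x \<in> carrier G \<Longrightarrow> x \<in> Jid G x"
  using Jid_memI[of x \<one> \<one>] by simp

lemma (in monoid) Jid_mono:
  assumes x: "x \<in> carrier G" and y: "y \<in> Jid G x"
  shows "Jid G y \<subseteq> Jid G x"
proof
  fix z assume "z \<in> Jid G y"
  then obtain p q where pq: "p \<in> carrier G" "q \<in> carrier G" "z = p \<otimes> y \<otimes> q"
    unfolding Jid_def by blast
  obtain m n where mn: "m \<in> carrier G" "n \<in> carrier G" "y = m \<otimes> x \<otimes> n"
    using y unfolding Jid_def by blast
  have "z = (p \<otimes> m) \<otimes> x \<otimes> (n \<otimes> q)"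
    using pq mn x by (simp add: m_assoc)
  then show "z \<in> Jid G x"
    using Jid_memI pq mn x by simp
qed

lemma (in monoid) finite_sandwich_power:
  assumes fin: "finite (carrier G)"
    and abe: "a \<in> carrier G" "b \<in> carrier G" "e \<in> carrier G" and e: "e = a \<otimes> e \<otimes> b"
  shows "\<exists>q::nat. q > 0 \<and> a [^] q \<otimes> e = e \<and> e \<otimes> b [^] q = e"
proof -
  have pow: "e = a [^] n \<otimes> e \<otimes> b [^] n" for n :: nat
  proof (induction n)
    case (Suc n)
    have "a [^] Suc n \<otimes> e \<otimes> b [^] Suc n = a [^] n \<otimes> (a \<otimes> e \<otimes> b) \<otimes> b [^] n"
      using abe by (subst nat_pow_Suc2[of b]) (simp_all add: m_assoc)
    then show ?case using Suc e by simp
  qed (use abe in simp)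
  have "finite ((\<lambda>n::nat. (a [^] n, b [^] n)) ` UNIV)"
    using abe by (intro finite_subset[OF _ finite_cartesian_product[OF fin fin]]) auto
  then have "\<not> inj (\<lambda>n::nat. (a [^] n, b [^] n))"
    using finite_imageD by blast
  then obtain i j :: nat where "i < j" "a [^] i = a [^] j" "b [^] i = b [^] j"
    unfolding inj_def by (metis Pair_inject linorder_neqE_nat)
  then obtain q :: nat where q: "q > 0" "a [^] q \<otimes> a [^] i = a [^] i" "b [^] i \<otimes> b [^] q = b [^] i"
    using abe by (metis add.commute less_imp_add_positive nat_pow_mult)
  have "a [^] q \<otimes> e = (a [^] q \<otimes> a [^] i) \<otimes> e \<otimes> b [^] i"
    using abe by (simp add: m_assoc flip: pow)
  then have left: "a [^] q \<otimes> e = e"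
    using q(2) pow by simp
  have "e \<otimes> b [^] q = (a [^] i \<otimes> e \<otimes> b [^] i) \<otimes> b [^] q"
    by (simp flip: pow)
  also have "\<dots> = a [^] i \<otimes> e \<otimes> (b [^] i \<otimes> b [^] q)"
    using abe by (simp add: m_assoc)
  finally have "e \<otimes> b [^] q = e"
    using q(3) pow by simp
  then show ?thesis
    using left q(1) by blast
qed

lemma (in monoid) finite_left_stable:
  assumes fin: "finite (carrier G)" and x: "x \<in> carrier G"
    and e: "e \<in> Jid G x" and xe: "x \<otimes> e = x"
  shows "\<exists>y\<in>carrier G. y \<otimes> x = e"
proof -
  obtain u v where uv: "u \<in> carrier G" "v \<in> carrier G" "e = u \<otimes> x \<otimes> v"
    using e unfolding Jid_def by blast
  define a where "a = u \<otimes> x"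
  have a: "a \<in> carrier G" and ae: "a \<otimes> e = a"
    using uv x xe by (simp_all add: a_def m_assoc)
  have ec: "e \<in> carrier G"
    using uv x by simp
  have "e = a \<otimes> e \<otimes> v"
    using ae uv by (simp add: a_def)
  then obtain q :: nat where q: "q > 0" "a [^] q \<otimes> e = e"
    using finite_sandwich_power[OF fin a uv(2) ec] by blast
  then obtain r where r: "q = Suc r"
    using gr0_implies_Suc by blast
  have "e = a [^] r \<otimes> (a \<otimes> e)"
    using q a ec by (simp add: r m_assoc)
  also have "\<dots> = (a [^] r \<otimes> u) \<otimes> x"
    using ae a uv x by (simp add: a_def m_assoc)
  finally show ?thesis
    using a uv by (metis m_closed nat_pow_closed)
qed

lemma (in group) orbit_translate:
  assumes k: "k \<in> carrier G"
    and comp: "\<And>g. g \<in> carrier G \<Longrightarrow> act (g \<otimes> k) v = act g (act k v)"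
  shows "(\<lambda>g. act g (act k v)) ` carrier G = (\<lambda>g. act g v) ` carrier G"
proof (intro equalityI image_subsetI)
  fix g assume g: "g \<in> carrier G"
  show "act g (act k v) \<in> (\<lambda>g. act g v) ` carrier G"
    using comp[OF g] g k by (metis image_eqI m_closed)
  have "act g v = act (g \<otimes> inv k) (act k v)"
    using comp[of "g \<otimes> inv k"] g k by (simp add: m_assoc)
  then show "act g v \<in> (\<lambda>g. act g (act k v)) ` carrier G"
    using g k by simp
qed

lemma rtrancl_symcl_invariant:
  assumes "\<And>u v. (u, v) \<in> S \<Longrightarrow> f u = f v" and "(u, v) \<in> (S \<union> S\<inverse>)\<^sup>*"
  shows "f u = f v"
  using assms(2) by induction (auto dest: assms(1))

lemma rtrancl_symcl_map:
  assumes "\<And>u v. (u, v) \<in> S \<Longrightarrow> (f u, f v) \<in> S" and "(u, v) \<in> (S \<union> S\<inverse>)\<^sup>*"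
  shows "(f u, f v) \<in> (S \<union> S\<inverse>)\<^sup>*"
  using assms(2) by induction (auto intro: rtrancl_into_rtrancl dest: assms(1))

section \<open>The J-class of an idempotent and its group\<close>

locale idempotent_J_class = monoid M for M :: "('m, 'd) monoid_scheme" (structure) +
  fixes e :: 'm
  assumes finite_carrier: "finite (carrier M)"
    and idem_closed [simp]: "e \<in> carrier M" and idem [simp]: "e \<otimes> e = e"
begin

lemma idem_left_absorb [simp]: "x \<in> carrier M \<Longrightarrow> e \<otimes> (e \<otimes> x) = e \<otimes> x"
  by (simp flip: m_assoc)

definition Jclass :: "'m set" where
  "Jclass = Jid M e - Iid M e"

(* the nonzero part of P(e)e, see PEe_eq *)
definition JMe :: "'m set" where
  "JMe = {x \<in> Jclass. x \<otimes> e = x}"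

lemma Jid_idem_closed: "y \<in> Jid M e \<Longrightarrow> y \<in> carrier M"
  using Jid_subset[OF idem_closed] by blast

lemma Jid_idem_mult:
  assumes y: "y \<in> Jid M e" and mn: "m \<in> carrier M" "n \<in> carrier M"
  shows "m \<otimes> y \<otimes> n \<in> Jid M e"
  using Jid_mono[OF idem_closed y] Jid_memI[OF Jid_idem_closed[OF y] mn] by blast

lemma Jid_idem_mult_left: "\<lbrakk>y \<in> Jid M e; m \<in> carrier M\<rbrakk> \<Longrightarrow> m \<otimes> y \<in> Jid M e"
  using Jid_idem_mult[of y m \<one>] Jid_idem_closed by simp

lemma Jid_idem_mult_right: "\<lbrakk>y \<in> Jid M e; n \<in> carrier M\<rbrakk> \<Longrightarrow> y \<otimes> n \<in> Jid M e"
  using Jid_idem_mult[of y \<one> n] Jid_idem_closed by simp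

lemma Jclass_iff: "y \<in> Jclass \<longleftrightarrow> y \<in> Jid M e \<and> e \<in> Jid M y"
proof -
  have "Jid M y = Jid M e \<longleftrightarrow> e \<in> Jid M y" if "y \<in> Jid M e"
    using that Jid_mono[OF idem_closed that] Jid_mono[OF Jid_idem_closed[OF that]] Jid_self[OF idem_closed]
    by blast
  then show ?thesis
    unfolding Jclass_def Iid_def by blast
qed

lemma Jclass_closed: "y \<in> Jclass \<Longrightarrow> y \<in> carrier M"
  using Jclass_iff Jid_idem_closed by blast

lemma idem_Jclass: "e \<in> Jclass"
  using Jclass_iff Jid_self by simp

lemma Jclass_factor:
  assumes y: "y \<in> Jid M e" and mn: "m \<in> carrier M" "n \<in> carrier M"
    and myn: "m \<otimes> y \<otimes> n \<in> Jclass"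
  shows "y \<in> Jclass"
proof -
  have "e \<in> Jid M (m \<otimes> y \<otimes> n)"
    using myn Jclass_iff by blast
  also have "Jid M (m \<otimes> y \<otimes> n) \<subseteq> Jid M y"
    using Jid_mono Jid_memI Jid_idem_closed y mn by blast
  finally show ?thesis
    using y Jclass_iff by blast
qed

lemma Jclass_factor_left: "\<lbrakk>y \<in> Jid M e; m \<in> carrier M; m \<otimes> y \<in> Jclass\<rbrakk> \<Longrightarrow> y \<in> Jclass"
  using Jclass_factor[of y m \<one>] Jid_idem_closed by simp

lemma Jclass_factor_right: "\<lbrakk>y \<in> Jid M e; n \<in> carrier M; y \<otimes> n \<in> Jclass\<rbrakk> \<Longrightarrow> y \<in> Jclass"
  using Jclass_factor[of y \<one> n] Jid_idem_closed by simp

lemma JMe_closed: "x \<in> JMe \<Longrightarrow> x \<in> carrier M"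
  unfolding JMe_def using Jclass_closed by blast

lemma JMe_left_inverse: "x \<in> JMe \<Longrightarrow> \<exists>y\<in>carrier M. y \<otimes> x = e"
  unfolding JMe_def using finite_left_stable[OF finite_carrier] Jclass_iff Jclass_closed by blast

lemma GJ_iff: "\<alpha> \<in> GJ M e \<longleftrightarrow> \<alpha> \<in> Jclass \<and> e \<otimes> \<alpha> = \<alpha> \<and> \<alpha> \<otimes> e = \<alpha>"
proof
  assume "\<alpha> \<in> GJ M e"
  then obtain m where "m \<in> carrier M" "\<alpha> = e \<otimes> m \<otimes> e" "\<alpha> \<in> Jclass"
    unfolding GJ_def Jclass_def by blast
  then show "\<alpha> \<in> Jclass \<and> e \<otimes> \<alpha> = \<alpha> \<and> \<alpha> \<otimes> e = \<alpha>"
    by (simp add: m_assoc)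
next
  assume "\<alpha> \<in> Jclass \<and> e \<otimes> \<alpha> = \<alpha> \<and> \<alpha> \<otimes> e = \<alpha>"
  then have "\<alpha> = e \<otimes> \<alpha> \<otimes> e" "\<alpha> \<in> carrier M" "\<alpha> \<in> Jclass"
    using Jclass_closed by auto
  then show "\<alpha> \<in> GJ M e"
    unfolding GJ_def Jclass_def by blast
qed

lemma idem_GJ: "e \<in> GJ M e"
  using GJ_iff idem_Jclass idem by blast

lemma GJ_JMe: "\<alpha> \<in> GJ M e \<Longrightarrow> \<alpha> \<in> JMe"
  unfolding JMe_def using GJ_iff by blast

lemma GJ_closed: "\<alpha> \<in> GJ M e \<Longrightarrow> \<alpha> \<in> carrier M"
  using GJ_JMe JMe_closed by blast

lemma GJ_inverse:
  assumes \<alpha>: "\<alpha> \<in> GJ M e"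
  shows "\<exists>\<beta>\<in>GJ M e. \<alpha> \<otimes> \<beta> = e \<and> \<beta> \<otimes> \<alpha> = e"
proof -
  have \<alpha>c: "\<alpha> \<in> carrier M" and e\<alpha>: "e \<otimes> \<alpha> = \<alpha>"
    using \<alpha> GJ_closed GJ_iff by auto
  obtain y where y: "y \<in> carrier M" "y \<otimes> \<alpha> = e"
    using JMe_left_inverse GJ_JMe \<alpha> by blast
  define \<beta> where "\<beta> = e \<otimes> y \<otimes> e"
  have \<beta>c: "\<beta> \<in> carrier M"
    using y by (simp add: \<beta>_def)
  have \<beta>\<alpha>: "\<beta> \<otimes> \<alpha> = e"
    using y \<alpha>c e\<alpha> by (simp add: \<beta>_def m_assoc)
  have "\<beta> \<in> Jid M e"
    using Jid_memI[of e "e \<otimes> y" \<one>] y by (simp add: \<beta>_def)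
  moreover have "e \<in> Jid M \<beta>"
    using Jid_memI[OF \<beta>c one_closed \<alpha>c] \<beta>\<alpha> \<beta>c by simp
  moreover have "e \<otimes> \<beta> = \<beta>" "\<beta> \<otimes> e = \<beta>"
    using y by (simp_all add: \<beta>_def m_assoc)
  ultimately have \<beta>: "\<beta> \<in> GJ M e"
    using GJ_iff Jclass_iff by blast
  obtain y' where y': "y' \<in> carrier M" "y' \<otimes> \<beta> = e"
    using JMe_left_inverse GJ_JMe \<beta> by blast
  have "\<alpha> = y' \<otimes> e"
    using \<beta>\<alpha> y' \<alpha>c \<beta>c e\<alpha> by (metis m_assoc)
  then have "\<alpha> \<otimes> \<beta> = e"
    using y' \<beta> GJ_iff \<beta>c by (simp add: m_assoc)
  then show ?thesis
    using \<beta> \<beta>\<alpha> by blast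
qed

lemma JMe_mult_GJ:
  assumes x: "x \<in> JMe" and \<alpha>: "\<alpha> \<in> GJ M e"
  shows "x \<otimes> \<alpha> \<in> JMe"
proof -
  have xc: "x \<in> carrier M" and \<alpha>c: "\<alpha> \<in> carrier M"
    using x \<alpha> JMe_closed GJ_closed by auto
  obtain y where y: "y \<in> carrier M" "y \<otimes> x = e"
    using JMe_left_inverse x by blast
  obtain \<beta> where \<beta>: "\<beta> \<in> GJ M e" "\<alpha> \<otimes> \<beta> = e"
    using GJ_inverse \<alpha> by blast
  have "e = y \<otimes> (x \<otimes> \<alpha>) \<otimes> \<beta>"
    using xc \<alpha>c y \<beta> GJ_closed x by (simp add: m_assoc JMe_def)
  then have "e \<in> Jid M (x \<otimes> \<alpha>)"
    using Jid_memI y \<beta> GJ_closed xc \<alpha>c by (metis m_closed)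
  moreover have "x \<otimes> \<alpha> \<in> Jid M e"
    using x Jid_idem_mult_right \<alpha>c unfolding JMe_def Jclass_iff by blast
  moreover have "x \<otimes> \<alpha> \<otimes> e = x \<otimes> \<alpha>"
    using \<alpha> GJ_iff xc \<alpha>c by (simp add: m_assoc)
  ultimately show ?thesis
    unfolding JMe_def Jclass_iff by blast
qed

lemma GJ_mult:
  assumes \<alpha>: "\<alpha> \<in> GJ M e" and \<gamma>: "\<gamma> \<in> GJ M e"
  shows "\<alpha> \<otimes> \<gamma> \<in> GJ M e"
proof -
  have "\<alpha> \<otimes> \<gamma> \<in> JMe"
    using JMe_mult_GJ[OF GJ_JMe[OF \<alpha>] \<gamma>] .
  moreover have "e \<otimes> (\<alpha> \<otimes> \<gamma>) = \<alpha> \<otimes> \<gamma>"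
    using \<alpha> \<gamma> GJ_iff GJ_closed by (simp flip: m_assoc)
  ultimately show ?thesis
    using GJ_iff unfolding JMe_def by blast
qed

lemma JMe_cancel:
  assumes x: "x \<in> JMe" and \<alpha>\<beta>: "\<alpha> \<in> GJ M e" "\<beta> \<in> GJ M e" and eq: "x \<otimes> \<alpha> = x \<otimes> \<beta>"
  shows "\<alpha> = \<beta>"
proof -
  obtain y where y: "y \<in> carrier M" "y \<otimes> x = e"
    using JMe_left_inverse x by blast
  have "e \<otimes> \<alpha> = e \<otimes> \<beta>"
    using eq y x \<alpha>\<beta> JMe_closed GJ_closed by (metis m_assoc)
  then show ?thesis
    using y \<alpha>\<beta> GJ_iff by simp
qed

end

section \<open>The product of P(e)\<close>

locale induced_rep = idempotent_J_class M e
  for G :: "('g, 'c) monoid_scheme" and M :: "('m, 'd) monoid_scheme" (structure)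
    and zM :: 'm and \<iota> :: "'g \<Rightarrow> 'm" and e :: 'm
    and W :: "'w set" and zW :: 'w and act :: "'g \<Rightarrow> 'w \<Rightarrow> 'w" and \<sigma> :: "'m \<Rightarrow> 'w \<Rightarrow> 'w" +
  assumes linear: "hatG_linear_monoid G M zM \<iota>"
    and left_ind: "left_inductive G M zM \<iota>"
    and idem_nonzero: "e \<noteq> zM"
    and W_rep: "repGJ_obj G M zM \<iota> e W zW act \<sigma>"
begin

abbreviation pmul :: "'m \<Rightarrow> 'm \<Rightarrow> 'm"  (infixr \<open>\<cdot>\<close> 75) where
  "a \<cdot> x \<equiv> pmult M zM e a x"

abbreviation "Pe \<equiv> PEe M zM e"

lemma group_G: "group G"
  using linear unfolding hatG_linear_monoid_def by blast

lemma G_one_closed: "\<one>\<^bsub>G\<^esub> \<in> carrier G"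
  and G_m_closed: "\<lbrakk>g \<in> carrier G; h \<in> carrier G\<rbrakk> \<Longrightarrow> g \<otimes>\<^bsub>G\<^esub> h \<in> carrier G"
  using group.is_monoid[OF group_G] by (simp_all add: monoid.one_closed monoid.m_closed)

lemma zero_closed [simp]: "zM \<in> carrier M"
  and zero_left [simp]: "x \<in> carrier M \<Longrightarrow> zM \<otimes> x = zM"
  and zero_right [simp]: "x \<in> carrier M \<Longrightarrow> x \<otimes> zM = zM"
  and iota_closed [simp]: "g \<in> carrier G \<Longrightarrow> \<iota> g \<in> carrier M"
  and iota_unit: "g \<in> carrier G \<Longrightarrow> \<iota> g \<in> Units M"
  and iota_central: "\<lbrakk>g \<in> carrier G; x \<in> carrier M\<rbrakk> \<Longrightarrow> \<iota> g \<otimes> x = x \<otimes> \<iota> g"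
  using linear unfolding hatG_linear_monoid_def hom_def by auto

lemma pmult_eq: "a \<cdot> x = (if a \<otimes> x \<in> Jclass then a \<otimes> x else zM)"
  unfolding pmult_def Jclass_def by simp

lemma zero_notin_Jclass: "zM \<notin> Jclass"
proof
  assume "zM \<in> Jclass"
  then obtain m n where "m \<in> carrier M" "n \<in> carrier M" "e = m \<otimes> zM \<otimes> n"
    unfolding Jclass_iff Jid_def by blast
  then show False
    using idem_nonzero by simp
qed

lemma Pset_eq: "Pset M zM e = Jclass \<union> {zM}"
  unfolding Pset_def Jclass_def by simp

lemma PEe_eq: "Pe = JMe \<union> {zM}"
proof -
  have "x \<cdot> e \<in> JMe \<union> {zM}" if "x \<in> Pset M zM e" for x
    using that Jclass_closed by (auto simp: Pset_eq pmult_eq JMe_def m_assoc)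
  moreover have "y \<cdot> e = y" if "y \<in> JMe \<union> {zM}" for y
    using that zero_notin_Jclass by (auto simp: pmult_eq JMe_def)
  moreover have "JMe \<union> {zM} \<subseteq> Pset M zM e"
    by (auto simp: Pset_eq JMe_def)
  ultimately show ?thesis
    unfolding PEe_def by (auto intro: rev_image_eqI)
qed

lemma zero_notin_JMe: "zM \<notin> JMe"
  using zero_notin_Jclass unfolding JMe_def by blast

lemma pmult_zero_left [simp]: "x \<in> carrier M \<Longrightarrow> zM \<cdot> x = zM"
  and pmult_zero_right [simp]: "a \<in> carrier M \<Longrightarrow> a \<cdot> zM = zM"
  using zero_notin_Jclass by (simp_all add: pmult_eq)

lemma pmult_JMe_GJ: "\<lbrakk>x \<in> JMe; \<alpha> \<in> GJ M e\<rbrakk> \<Longrightarrow> x \<cdot> \<alpha> = x \<otimes> \<alpha>"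
  using JMe_mult_GJ unfolding JMe_def by (simp add: pmult_eq)

lemma pmult_assoc:
  assumes a: "a \<in> carrier M" and x: "x \<in> Jid M e" and \<alpha>: "\<alpha> \<in> carrier M"
  shows "a \<cdot> (x \<cdot> \<alpha>) = (a \<cdot> x) \<cdot> \<alpha>"
proof -
  have xc: "x \<in> carrier M"
    using x Jid_idem_closed by blast
  have "x \<otimes> \<alpha> \<in> Jclass" "a \<otimes> x \<in> Jclass" if "a \<otimes> x \<otimes> \<alpha> \<in> Jclass"
    using that Jclass_factor_left[OF Jid_idem_mult_right[OF x \<alpha>] a]
      Jclass_factor_right[OF Jid_idem_mult_left[OF x a] \<alpha>] a xc \<alpha>
    by (simp_all add: m_assoc)
  then show ?thesis
    using a xc \<alpha> zero_notin_Jclass by (auto simp: pmult_eq m_assoc)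
qed

lemma PEe_Jid: "x \<in> Pe \<Longrightarrow> x \<in> Jid M e"
  using Jid_memI[of e zM \<one>] by (auto simp: PEe_eq JMe_def Jclass_iff)

lemma PEe_Pset: "x \<in> Pe \<Longrightarrow> x \<in> Pset M zM e"
  by (auto simp: PEe_eq Pset_eq JMe_def)

lemma PEe_carrier: "x \<in> Pe \<Longrightarrow> x \<in> carrier M"
  using PEe_Jid Jid_idem_closed by blast

lemma PEe_closed: "\<lbrakk>a \<in> carrier M; x \<in> Pe\<rbrakk> \<Longrightarrow> a \<cdot> x \<in> Pe"
  using JMe_closed by (auto simp: PEe_eq pmult_eq JMe_def m_assoc)

lemma PEe_mult_hatGJ: "\<lbrakk>x \<in> Pe; \<alpha> \<in> hatGJ M zM e\<rbrakk> \<Longrightarrow> x \<cdot> \<alpha> \<in> Pe"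
  using pmult_JMe_GJ JMe_mult_GJ JMe_closed GJ_closed
  by (auto simp: PEe_eq hatGJ_def)

lemma iota_idem_GJ:
  assumes g: "g \<in> carrier G"
  shows "\<iota> g \<otimes> e \<in> GJ M e"
proof -
  have inv: "inv (\<iota> g) \<in> carrier M"
    using Units_inv_closed[OF iota_unit[OF g]] .
  have "inv (\<iota> g) \<otimes> (\<iota> g \<otimes> e) \<otimes> \<one> \<in> Jid M (\<iota> g \<otimes> e)"
    using Jid_memI[OF _ inv one_closed] g by simp
  moreover have "inv (\<iota> g) \<otimes> (\<iota> g \<otimes> e) \<otimes> \<one> = e"
    using iota_unit[OF g] inv g by (simp add: Units_l_inv flip: m_assoc)
  moreover have "\<iota> g \<otimes> e \<in> Jid M e"
    using Jid_idem_mult_left[OF Jid_self] g by simp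
  moreover have "e \<otimes> (\<iota> g \<otimes> e) = \<iota> g \<otimes> e" "\<iota> g \<otimes> e \<otimes> e = \<iota> g \<otimes> e"
    using iota_central[OF g idem_closed] g by (simp_all add: m_assoc)
  ultimately show ?thesis
    using GJ_iff Jclass_iff by simp
qed

lemma pmult_iota_JMe:
  assumes x: "x \<in> JMe" and g: "g \<in> carrier G"
  shows "\<iota> g \<cdot> x = x \<cdot> (\<iota> g \<otimes> e)"
proof -
  have "\<iota> g \<otimes> x = x \<otimes> (\<iota> g \<otimes> e)"
    using x g iota_central JMe_closed[OF x] unfolding JMe_def by (simp flip: m_assoc)
  then show ?thesis
    by (simp add: pmult_eq)
qed

lemma P_rep: "rep_obj G M zM \<iota> (Pset M zM e) zM (\<lambda>g x. \<iota> g \<cdot> x) (\<cdot>)"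
  using left_ind unfolding left_inductive_def by simp

lemma P_one: "x \<in> Pset M zM e \<Longrightarrow> \<one> \<cdot> x = x"
  using P_rep unfolding rep_obj_def by blast

lemma P_comp: "\<lbrakk>a \<in> carrier M; b \<in> carrier M; x \<in> Pset M zM e\<rbrakk> \<Longrightarrow> (a \<otimes> b) \<cdot> x = a \<cdot> (b \<cdot> x)"
  using P_rep unfolding rep_obj_def by blast

lemma P_iota_one: "x \<in> Pset M zM e \<Longrightarrow> \<iota> \<one>\<^bsub>G\<^esub> \<cdot> x = x"
  using P_rep unfolding rep_obj_def vect_obj_def by blast

lemma P_iota_comp:
  "\<lbrakk>g \<in> carrier G; h \<in> carrier G; x \<in> Pset M zM e\<rbrakk> \<Longrightarrow> \<iota> (g \<otimes>\<^bsub>G\<^esub> h) \<cdot> x = \<iota> g \<cdot> (\<iota> h \<cdot> x)"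
  using P_rep unfolding rep_obj_def vect_obj_def by blast

lemma P_iota_comm:
  "\<lbrakk>a \<in> carrier M; g \<in> carrier G; x \<in> Pset M zM e\<rbrakk> \<Longrightarrow> a \<cdot> (\<iota> g \<cdot> x) = \<iota> g \<cdot> (a \<cdot> x)"
  using P_rep unfolding rep_obj_def vect_mor_def by blast

lemma P_orbit:
  "\<lbrakk>a \<in> carrier M; x1 \<in> Pset M zM e; x2 \<in> Pset M zM e; a \<cdot> x1 = a \<cdot> x2; a \<cdot> x1 \<noteq> zM\<rbrakk>
    \<Longrightarrow> (\<lambda>g. \<iota> g \<cdot> x1) ` carrier G = (\<lambda>g. \<iota> g \<cdot> x2) ` carrier G"
  using P_rep unfolding rep_obj_def vect_mor_def by blast

section \<open>The tensor relation\<close>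

lemma W_obj: "vect_obj G W zW act"
  using W_rep unfolding repGJ_obj_def by blast

lemma zero_vec_closed [simp]: "zW \<in> W"
  and act_closed: "\<lbrakk>g \<in> carrier G; w \<in> W\<rbrakk> \<Longrightarrow> act g w \<in> W"
  and act_free: "\<lbrakk>g \<in> carrier G; w \<in> W; w \<noteq> zW; act g w = w\<rbrakk> \<Longrightarrow> g = \<one>\<^bsub>G\<^esub>"
  using W_obj unfolding vect_obj_def by blast+

lemma sigma_closed: "\<lbrakk>\<alpha> \<in> hatGJ M zM e; w \<in> W\<rbrakk> \<Longrightarrow> \<sigma> \<alpha> w \<in> W"
  and sigma_zero_vec: "\<alpha> \<in> hatGJ M zM e \<Longrightarrow> \<sigma> \<alpha> zW = zW"
  using W_rep unfolding repGJ_obj_def vect_mor_def by blast+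

lemma sigma_mult: "\<lbrakk>\<alpha> \<in> hatGJ M zM e; \<beta> \<in> hatGJ M zM e; w \<in> W\<rbrakk> \<Longrightarrow> \<sigma> (\<alpha> \<otimes> \<beta>) w = \<sigma> \<alpha> (\<sigma> \<beta> w)"
  and sigma_idem: "w \<in> W \<Longrightarrow> \<sigma> e w = w"
  and sigma_zero: "w \<in> W \<Longrightarrow> \<sigma> zM w = zW"
  and sigma_iota: "\<lbrakk>g \<in> carrier G; w \<in> W\<rbrakk> \<Longrightarrow> \<sigma> (\<iota> g \<otimes> e) w = act g w"
  using W_rep unfolding repGJ_obj_def by blast+

lemma GJ_hatGJ: "\<alpha> \<in> GJ M e \<Longrightarrow> \<alpha> \<in> hatGJ M zM e"
  unfolding hatGJ_def by blast

abbreviation "gen \<equiv> tens_gen G M zM \<iota> e W zW act \<sigma>"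
abbreviation "rel \<equiv> tens_rel G M zM \<iota> e W zW act \<sigma>"
abbreviation "V \<equiv> tens_carrier G M zM \<iota> e W zW act \<sigma>"
abbreviation "Z \<equiv> tens_zero G M zM \<iota> e W zW act \<sigma>"
abbreviation "gact \<equiv> tens_gact G M zM \<iota> e W zW act \<sigma>"
abbreviation "mact \<equiv> tens_mact G M zM \<iota> e W zW act \<sigma>"

lemma gen_hatGJ:
  assumes "x \<in> Pe" "\<alpha> \<in> hatGJ M zM e" "w \<in> W"
  shows "((x \<cdot> \<alpha>, w), (x, \<sigma> \<alpha> w)) \<in> gen"
proof -
  have "((x \<cdot> \<alpha>, w), (x, \<sigma> \<alpha> w)) \<in> (Pe \<times> W) \<times> (Pe \<times> W)"
    using assms PEe_mult_hatGJ sigma_closed by simp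
  then show ?thesis
    unfolding tens_gen_def using assms by blast
qed

lemma gen_iota:
  assumes "x \<in> Pe" "g \<in> carrier G" "w \<in> W"
  shows "((\<iota> g \<cdot> x, w), (x, act g w)) \<in> gen"
proof -
  have "((\<iota> g \<cdot> x, w), (x, act g w)) \<in> (Pe \<times> W) \<times> (Pe \<times> W)"
    using assms PEe_closed act_closed by simp
  then show ?thesis
    unfolding tens_gen_def using assms by blast
qed

lemma gen_zero:
  assumes "x \<in> Pe" "w \<in> W"
  shows "((x, zW), (zM, w)) \<in> gen"
proof -
  have "((x, zW), (zM, w)) \<in> (Pe \<times> W) \<times> (Pe \<times> W)"
    using assms by (simp add: PEe_eq)
  then show ?thesis
    unfolding tens_gen_def using assms by blast
qed

lemma gen_cases:
  assumes "(u, v) \<in> gen"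
  obtains (hatGJ) x \<alpha> w where "x \<in> Pe" "\<alpha> \<in> hatGJ M zM e" "w \<in> W" "u = (x \<cdot> \<alpha>, w)" "v = (x, \<sigma> \<alpha> w)"
  | (iota) x g w where "x \<in> Pe" "g \<in> carrier G" "w \<in> W" "u = (\<iota> g \<cdot> x, w)" "v = (x, act g w)"
  | (zero) x w where "x \<in> Pe" "w \<in> W" "u = (x, zW)" "v = (zM, w)"
proof -
  have "(u, v) \<in> {((x \<cdot> \<alpha>, w), (x, \<sigma> \<alpha> w)) | x \<alpha> w. x \<in> Pe \<and> \<alpha> \<in> hatGJ M zM e \<and> w \<in> W}
    \<union> {((\<iota> g \<cdot> x, w), (x, act g w)) | x g w. x \<in> Pe \<and> g \<in> carrier G \<and> w \<in> W}
    \<union> {((x, zW), (zM, w)) | x w. x \<in> Pe \<and> w \<in> W}"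
    using assms unfolding tens_gen_def by (rule IntD1)
  then show ?thesis
  proof (elim UnE)
    assume "(u, v) \<in> {((x \<cdot> \<alpha>, w), (x, \<sigma> \<alpha> w)) | x \<alpha> w. x \<in> Pe \<and> \<alpha> \<in> hatGJ M zM e \<and> w \<in> W}"
    then show ?thesis using that(1) by blast
  next
    assume "(u, v) \<in> {((\<iota> g \<cdot> x, w), (x, act g w)) | x g w. x \<in> Pe \<and> g \<in> carrier G \<and> w \<in> W}"
    then show ?thesis using that(2) by blast
  next
    assume "(u, v) \<in> {((x, zW), (zM, w)) | x w. x \<in> Pe \<and> w \<in> W}"
    then show ?thesis using that(3) by blast
  qed
qed

lemma rel_equiv: "equiv UNIV rel"
  unfolding tens_rel_def equiv_def
  by (simp add: refl_rtrancl sym_rtrancl[OF sym_Un_converse] trans_rtrancl)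

lemma gen_rel: "(u, v) \<in> gen \<Longrightarrow> (u, v) \<in> rel"
  and gen_rel_converse: "(u, v) \<in> gen \<Longrightarrow> (v, u) \<in> rel"
  unfolding tens_rel_def by blast+

(* the nonzero rewritings y \<otimes> v of x \<otimes> w obtained by moving an element of G_J across the
  tensor sign *)
fun reduced_forms :: "'m \<times> 'w \<Rightarrow> ('m \<times> 'w) set" where
  "reduced_forms (x, w) =
     {(y, \<sigma> \<alpha> w) | y \<alpha>. y \<in> JMe \<and> \<alpha> \<in> GJ M e \<and> x = y \<otimes> \<alpha> \<and> \<sigma> \<alpha> w \<noteq> zW}"

declare reduced_forms.simps [simp del]

lemma reduced_forms_zero_left: "reduced_forms (zM, w) = {}"
proof -
  have "zM \<noteq> y \<otimes> \<alpha>" if "y \<in> JMe" "\<alpha> \<in> GJ M e" for y \<alpha>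
    using JMe_mult_GJ[OF that] zero_notin_JMe by metis
  then show ?thesis
    by (auto simp: reduced_forms.simps)
qed

lemma reduced_forms_zero_right: "reduced_forms (x, zW) = {}"
  using sigma_zero_vec[OF GJ_hatGJ] by (auto simp: reduced_forms.simps)

lemma reduced_forms_self:
  assumes "x \<in> JMe" "w \<in> W" "w \<noteq> zW"
  shows "(x, w) \<in> reduced_forms (x, w)"
proof -
  have "(x, w) = (x, \<sigma> e w) \<and> x \<in> JMe \<and> e \<in> GJ M e \<and> x = x \<otimes> e \<and> \<sigma> e w \<noteq> zW"
    using assms idem_GJ sigma_idem by (simp add: JMe_def)
  then show ?thesis
    unfolding reduced_forms.simps mem_Collect_eq by (intro exI[of _ x] exI[of _ e])
qed

lemma reduced_forms_nonempty:
  assumes "reduced_forms (x, w) \<noteq> {}"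
  shows "x \<in> JMe \<and> w \<noteq> zW"
proof -
  obtain u where "u \<in> reduced_forms (x, w)"
    using assms by blast
  then obtain y \<alpha> where "y \<in> JMe" "\<alpha> \<in> GJ M e" "x = y \<otimes> \<alpha>" "\<sigma> \<alpha> w \<noteq> zW"
    by (simp only: reduced_forms.simps) blast
  then show ?thesis
    using JMe_mult_GJ[of y \<alpha>] sigma_zero_vec[OF GJ_hatGJ, of \<alpha>] by metis
qed

lemma reduced_forms_mult:
  assumes x: "x \<in> JMe" and \<alpha>: "\<alpha> \<in> GJ M e" and w: "w \<in> W"
  shows "reduced_forms (x \<otimes> \<alpha>, w) = reduced_forms (x, \<sigma> \<alpha> w)"
proof (intro equalityI subsetI)
  fix u assume "u \<in> reduced_forms (x \<otimes> \<alpha>, w)"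
  then obtain y \<beta> where y: "y \<in> JMe" and \<beta>: "\<beta> \<in> GJ M e" and eq: "x \<otimes> \<alpha> = y \<otimes> \<beta>"
    and u: "u = (y, \<sigma> \<beta> w)" "\<sigma> \<beta> w \<noteq> zW"
    by (auto simp: reduced_forms.simps)
  obtain \<alpha>' where \<alpha>': "\<alpha>' \<in> GJ M e" "\<alpha> \<otimes> \<alpha>' = e" "\<alpha>' \<otimes> \<alpha> = e"
    using GJ_inverse \<alpha> by blast
  have c: "x \<in> carrier M" "y \<in> carrier M" "\<alpha> \<in> carrier M" "\<alpha>' \<in> carrier M" "\<beta> \<in> carrier M"
    using x y \<alpha> \<alpha>' \<beta> JMe_closed GJ_closed by auto
  have "x = x \<otimes> (\<alpha> \<otimes> \<alpha>')"
    using x \<alpha>' by (simp add: JMe_def)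
  also have "\<dots> = y \<otimes> (\<beta> \<otimes> \<alpha>')"
    using eq c by (simp flip: m_assoc)
  finally have "x = y \<otimes> (\<beta> \<otimes> \<alpha>')" .
  moreover have "\<beta> \<otimes> \<alpha>' \<otimes> \<alpha> = \<beta>"
    using c \<alpha>' \<beta> GJ_iff by (simp add: m_assoc)
  then have "\<sigma> \<beta> w = \<sigma> (\<beta> \<otimes> \<alpha>') (\<sigma> \<alpha> w)"
    using sigma_mult[OF GJ_hatGJ[OF GJ_mult[OF \<beta> \<alpha>'(1)]] GJ_hatGJ[OF \<alpha>] w] by simp
  ultimately show "u \<in> reduced_forms (x, \<sigma> \<alpha> w)"
    using y u GJ_mult[OF \<beta> \<alpha>'(1)] by (auto simp: reduced_forms.simps)
next
  fix u assume "u \<in> reduced_forms (x, \<sigma> \<alpha> w)"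
  then obtain y \<gamma> where y: "y \<in> JMe" and \<gamma>: "\<gamma> \<in> GJ M e" and eq: "x = y \<otimes> \<gamma>"
    and u: "u = (y, \<sigma> \<gamma> (\<sigma> \<alpha> w))" "\<sigma> \<gamma> (\<sigma> \<alpha> w) \<noteq> zW"
    by (auto simp: reduced_forms.simps)
  have "x \<otimes> \<alpha> = y \<otimes> (\<gamma> \<otimes> \<alpha>)" "\<sigma> \<gamma> (\<sigma> \<alpha> w) = \<sigma> (\<gamma> \<otimes> \<alpha>) w"
    using eq y \<gamma> \<alpha> w JMe_closed GJ_closed sigma_mult GJ_hatGJ by (simp_all add: m_assoc)
  then show "u \<in> reduced_forms (x \<otimes> \<alpha>, w)"
    using y u GJ_mult[OF \<gamma> \<alpha>] by (auto simp: reduced_forms.simps)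
qed

lemma reduced_forms_gen:
  assumes "(u, v) \<in> gen"
  shows "reduced_forms u = reduced_forms v"
  using assms
proof (cases rule: gen_cases)
  case (hatGJ x \<alpha> w)
  consider "x = zM" | "\<alpha> = zM" | "x \<in> JMe" "\<alpha> \<in> GJ M e"
    using hatGJ(1,2) by (auto simp: PEe_eq hatGJ_def)
  then show ?thesis
  proof cases
    case 1
    have "\<alpha> \<in> carrier M"
      using hatGJ(2) GJ_closed by (auto simp: hatGJ_def)
    then show ?thesis
      using hatGJ(4,5) 1 by (simp add: reduced_forms_zero_left)
  next
    case 2
    then show ?thesis
      using hatGJ sigma_zero PEe_carrier by (simp add: reduced_forms_zero_left reduced_forms_zero_right)
  next
    case 3
    then show ?thesis
      using hatGJ pmult_JMe_GJ reduced_forms_mult by simp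
  qed
next
  case (iota x g w)
  show ?thesis
  proof (cases "x = zM")
    case True
    then show ?thesis
      using iota reduced_forms_zero_left by simp
  next
    case False
    then have "x \<in> JMe"
      using iota(1) by (simp add: PEe_eq)
    then show ?thesis
      using iota pmult_iota_JMe pmult_JMe_GJ iota_idem_GJ reduced_forms_mult sigma_iota by simp
  qed
next
  case (zero x w)
  then show ?thesis
    using reduced_forms_zero_left reduced_forms_zero_right by simp
qed

lemma rel_zero_of_no_reduced_forms:
  assumes x: "x \<in> Pe" and w: "w \<in> W" and empty: "reduced_forms (x, w) = {}"
  shows "((x, w), (zM, zW)) \<in> rel"
proof (cases "x = zM")
  case True
  then show ?thesis
    using gen_rel_converse[OF gen_zero[OF x w]] by simp
next
  case False
  then have "x \<in> JMe"
    using x by (simp add: PEe_eq)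
  then have "w = zW"
    using reduced_forms_self[OF _ w] empty by blast
  then show ?thesis
    using gen_rel[OF gen_zero[OF x zero_vec_closed]] by simp
qed

lemma rel_sym: "(u, v) \<in> rel \<Longrightarrow> (v, u) \<in> rel"
  and rel_trans: "\<lbrakk>(u, v) \<in> rel; (v, t) \<in> rel\<rbrakk> \<Longrightarrow> (u, t) \<in> rel"
  using rel_equiv unfolding equiv_def by (blast dest: symD, blast dest: transD)

lemma rel_iff_reduced_forms:
  assumes u: "(x1, w1) \<in> Pe \<times> W" and v: "(x2, w2) \<in> Pe \<times> W"
  shows "((x1, w1), (x2, w2)) \<in> rel \<longleftrightarrow> reduced_forms (x1, w1) = reduced_forms (x2, w2)"
proof
  assume "((x1, w1), (x2, w2)) \<in> rel"
  then show "reduced_forms (x1, w1) = reduced_forms (x2, w2)"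
    using rtrancl_symcl_invariant[of gen reduced_forms, OF reduced_forms_gen]
    unfolding tens_rel_def by blast
next
  assume eq: "reduced_forms (x1, w1) = reduced_forms (x2, w2)"
  show "((x1, w1), (x2, w2)) \<in> rel"
  proof (cases "reduced_forms (x1, w1) = {}")
    case True
    then have "((x1, w1), (zM, zW)) \<in> rel" "((x2, w2), (zM, zW)) \<in> rel"
      using rel_zero_of_no_reduced_forms u v eq by auto
    then show ?thesis
      using rel_sym rel_trans by blast
  next
    case False
    then have x1: "x1 \<in> JMe" and "w1 \<noteq> zW"
      using reduced_forms_nonempty by auto
    then have "(x1, w1) \<in> reduced_forms (x2, w2)"
      using reduced_forms_self eq u by auto
    then obtain \<beta> where \<beta>: "\<beta> \<in> GJ M e" "x2 = x1 \<otimes> \<beta>" "w1 = \<sigma> \<beta> w2"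
      by (auto simp: reduced_forms.simps)
    have "((x1 \<cdot> \<beta>, w2), (x1, \<sigma> \<beta> w2)) \<in> gen"
      using gen_hatGJ \<beta> GJ_hatGJ x1 v by (simp add: PEe_eq)
    then show ?thesis
      using gen_rel_converse \<beta> pmult_JMe_GJ x1 by simp
  qed
qed

lemma class_eq_iff: "rel `` {u} = rel `` {v} \<longleftrightarrow> (u, v) \<in> rel"
  using equiv_class_eq_iff[OF rel_equiv] by simp

lemma class_eq_iff_reduced_forms:
  "\<lbrakk>(x1, w1) \<in> Pe \<times> W; (x2, w2) \<in> Pe \<times> W\<rbrakk> \<Longrightarrow>
    rel `` {(x1, w1)} = rel `` {(x2, w2)} \<longleftrightarrow> reduced_forms (x1, w1) = reduced_forms (x2, w2)"
  using class_eq_iff rel_iff_reduced_forms by simp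

lemma class_eq_zero_iff:
  "(x, w) \<in> Pe \<times> W \<Longrightarrow> rel `` {(x, w)} = Z \<longleftrightarrow> reduced_forms (x, w) = {}"
  unfolding tens_zero_def
  using class_eq_iff_reduced_forms[of x w zM zW] reduced_forms_zero_left by (simp add: PEe_eq)

lemma class_eq_nonzeroE:
  assumes u: "(y1, w1) \<in> Pe \<times> W" and v: "(y2, w2) \<in> Pe \<times> W"
    and eq: "rel `` {(y1, w1)} = rel `` {(y2, w2)}" and nz: "rel `` {(y1, w1)} \<noteq> Z"
  obtains \<beta> where "y1 \<in> JMe" "w1 \<noteq> zW" "\<beta> \<in> GJ M e" "y2 = y1 \<otimes> \<beta>" "w1 = \<sigma> \<beta> w2"
proof -
  have "reduced_forms (y1, w1) \<noteq> {}"
    using nz class_eq_zero_iff u by simp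
  then have y1: "y1 \<in> JMe" and w1: "w1 \<noteq> zW"
    using reduced_forms_nonempty by auto
  have "(y1, w1) \<in> reduced_forms (y2, w2)"
    using eq class_eq_iff_reduced_forms[OF u v] reduced_forms_self[OF y1 _ w1] u by simp
  then show ?thesis
    using that y1 w1 by (auto simp: reduced_forms.simps)
qed

section \<open>The action on the induced object\<close>

lemma gen_pmult_left:
  assumes a: "a \<in> carrier M" and uv: "(u, v) \<in> gen"
  shows "((a \<cdot> fst u, snd u), (a \<cdot> fst v, snd v)) \<in> gen"
  using uv
proof (cases rule: gen_cases)
  case (hatGJ x \<alpha> w)
  have "a \<cdot> (x \<cdot> \<alpha>) = (a \<cdot> x) \<cdot> \<alpha>"
    using pmult_assoc[OF a PEe_Jid] hatGJ(1,2) GJ_closed by (auto simp: hatGJ_def)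
  then show ?thesis
    using hatGJ gen_hatGJ[OF PEe_closed[OF a hatGJ(1)]] by simp
next
  case (iota x g w)
  then show ?thesis
    using gen_iota[OF PEe_closed[OF a iota(1)]] P_iota_comm[OF a _ PEe_Pset] by simp
next
  case (zero x w)
  then show ?thesis
    using gen_zero[OF PEe_closed[OF a zero(1)]] a by simp
qed

lemma rel_pmult_left:
  "\<lbrakk>a \<in> carrier M; (u, v) \<in> rel\<rbrakk> \<Longrightarrow> ((a \<cdot> fst u, snd u), (a \<cdot> fst v, snd v)) \<in> rel"
  unfolding tens_rel_def by (rule rtrancl_symcl_map[OF gen_pmult_left])

lemma mact_class:
  assumes a: "a \<in> carrier M"
  shows "mact a (rel `` {(x, w)}) = rel `` {(a \<cdot> x, w)}"
proof -
  have "(\<lambda>(x, w). rel `` {(a \<cdot> x, w)}) respects rel"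
  proof (rule congruentI)
    fix u v assume "(u, v) \<in> rel"
    then show "(case u of (x, w) \<Rightarrow> rel `` {(a \<cdot> x, w)}) = (case v of (x, w) \<Rightarrow> rel `` {(a \<cdot> x, w)})"
      using rel_pmult_left[OF a] class_eq_iff by (simp add: split_beta)
  qed
  then show ?thesis
    unfolding tens_mact_def by (simp add: UN_equiv_class[OF rel_equiv])
qed

lemma gact_class: "g \<in> carrier G \<Longrightarrow> gact g (rel `` {(x, w)}) = rel `` {(\<iota> g \<cdot> x, w)}"
  using mact_class[OF iota_closed] unfolding tens_gact_def tens_mact_def by simp

lemma carrier_classE:
  assumes "C \<in> V"
  obtains x w where "x \<in> Pe" "w \<in> W" "C = rel `` {(x, w)}"
  using assms unfolding tens_carrier_def by (auto elim: quotientE)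

lemma class_in_carrier: "\<lbrakk>x \<in> Pe; w \<in> W\<rbrakk> \<Longrightarrow> rel `` {(x, w)} \<in> V"
  unfolding tens_carrier_def by (simp add: quotientI)

lemma gact_comp:
  "\<lbrakk>g \<in> carrier G; h \<in> carrier G; C \<in> V\<rbrakk> \<Longrightarrow> gact (g \<otimes>\<^bsub>G\<^esub> h) C = gact g (gact h C)"
  by (elim carrier_classE)
    (simp add: gact_class G_m_closed P_iota_comp PEe_Pset PEe_closed)

lemma gact_free:
  assumes g: "g \<in> carrier G" and x: "x \<in> Pe" and w: "w \<in> W"
    and nz: "rel `` {(x, w)} \<noteq> Z" and fixed: "gact g (rel `` {(x, w)}) = rel `` {(x, w)}"
  shows "g = \<one>\<^bsub>G\<^esub>"
proof -
  have "rel `` {(x, w)} = rel `` {(\<iota> g \<cdot> x, w)}"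
    using fixed gact_class[OF g] by simp
  then obtain \<beta> where xJ: "x \<in> JMe" and wz: "w \<noteq> zW"
    and \<beta>: "\<beta> \<in> GJ M e" "\<iota> g \<cdot> x = x \<otimes> \<beta>" "w = \<sigma> \<beta> w"
    using class_eq_nonzeroE x w PEe_closed[OF iota_closed[OF g] x] nz by blast
  have "\<iota> g \<cdot> x = x \<otimes> (\<iota> g \<otimes> e)"
    using pmult_iota_JMe[OF xJ g] pmult_JMe_GJ[OF xJ iota_idem_GJ[OF g]] by simp
  then have "\<beta> = \<iota> g \<otimes> e"
    using JMe_cancel[OF xJ \<beta>(1) iota_idem_GJ[OF g]] \<beta>(2) by simp
  then have "act g w = w"
    using \<beta>(3) sigma_iota[OF g w] by simp
  then show ?thesis
    using act_free[OF g w wz] by simp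
qed

lemma tensor_vect_obj: "vect_obj G V Z gact"
  unfolding vect_obj_def
proof (intro conjI ballI impI)
  have "V = (\<lambda>u. rel `` {u}) ` (Pe \<times> W)"
    unfolding tens_carrier_def quotient_def by auto
  moreover have "finite (Pe \<times> W)"
    using finite_subset[OF _ finite_carrier] PEe_carrier W_obj unfolding vect_obj_def by blast
  ultimately show "finite V"
    by simp
  show "Z \<in> V"
    unfolding tens_zero_def using class_in_carrier by (simp add: PEe_eq)
  show "gact g Z = Z" if "g \<in> carrier G" for g
    unfolding tens_zero_def using gact_class that by simp
next
  fix g C assume g: "g \<in> carrier G" and C: "C \<in> V"
  then show "gact g C \<in> V"
    by (elim carrier_classE) (simp add: gact_class class_in_carrier PEe_closed)
next
  fix C assume "C \<in> V"
  then show "gact \<one>\<^bsub>G\<^esub> C = C"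
    by (elim carrier_classE) (simp add: gact_class G_one_closed P_iota_one PEe_Pset)
next
  fix g h C assume "g \<in> carrier G" "h \<in> carrier G" "C \<in> V"
  then show "gact (g \<otimes>\<^bsub>G\<^esub> h) C = gact g (gact h C)"
    by (rule gact_comp)
next
  fix g C assume "g \<in> carrier G" "C \<in> V" "C \<noteq> Z" "gact g C = C"
  then show "g = \<one>\<^bsub>G\<^esub>"
    by (elim carrier_classE) (simp add: gact_free)
qed

lemma mact_eq_imp_translate:
  assumes a: "a \<in> carrier M" and x1: "x1 \<in> Pe" "w1 \<in> W" and x2: "x2 \<in> Pe" "w2 \<in> W"
    and eq: "rel `` {(a \<cdot> x1, w1)} = rel `` {(a \<cdot> x2, w2)}" and nz: "rel `` {(a \<cdot> x1, w1)} \<noteq> Z"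
  shows "\<exists>h\<in>carrier G. rel `` {(x1, w1)} = rel `` {(\<iota> h \<cdot> x2, w2)}"
proof -
  obtain \<beta> where ax1: "a \<cdot> x1 \<in> JMe" and \<beta>: "\<beta> \<in> GJ M e" "a \<cdot> x2 = (a \<cdot> x1) \<otimes> \<beta>" "w1 = \<sigma> \<beta> w2"
    using class_eq_nonzeroE eq nz PEe_closed[OF a] x1 x2 by (metis mem_Sigma_iff)
  have x1\<beta>: "x1 \<cdot> \<beta> \<in> Pe"
    using PEe_mult_hatGJ[OF x1(1) GJ_hatGJ[OF \<beta>(1)]] .
  have "a \<cdot> (x1 \<cdot> \<beta>) = a \<cdot> x2"
    using pmult_assoc[OF a PEe_Jid[OF x1(1)] GJ_closed[OF \<beta>(1)]] pmult_JMe_GJ[OF ax1 \<beta>(1)] \<beta>(2)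
    by simp
  moreover have "a \<cdot> x2 \<noteq> zM"
    using \<beta>(2) JMe_mult_GJ[OF ax1 \<beta>(1)] zero_notin_JMe by metis
  ultimately have orbit: "(\<lambda>g. \<iota> g \<cdot> (x1 \<cdot> \<beta>)) ` carrier G = (\<lambda>g. \<iota> g \<cdot> x2) ` carrier G"
    using P_orbit[OF a PEe_Pset[OF x1\<beta>] PEe_Pset[OF x2(1)]] by metis
  have "\<iota> \<one>\<^bsub>G\<^esub> \<cdot> (x1 \<cdot> \<beta>) \<in> (\<lambda>g. \<iota> g \<cdot> (x1 \<cdot> \<beta>)) ` carrier G"
    using G_one_closed by (rule imageI)
  then have "x1 \<cdot> \<beta> \<in> (\<lambda>g. \<iota> g \<cdot> x2) ` carrier G"
    unfolding orbit P_iota_one[OF PEe_Pset[OF x1\<beta>]] .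
  then obtain h where h: "h \<in> carrier G" "x1 \<cdot> \<beta> = \<iota> h \<cdot> x2"
    by blast
  have "rel `` {(x1, w1)} = rel `` {(x1 \<cdot> \<beta>, w2)}"
    using gen_rel_converse[OF gen_hatGJ[OF x1(1) GJ_hatGJ[OF \<beta>(1)] x2(2)]] \<beta>(3)
    by (simp add: class_eq_iff)
  then show ?thesis
    using h by metis
qed

lemma tensor_vect_mor:
  assumes a: "a \<in> carrier M"
  shows "vect_mor G V Z gact V Z gact (mact a)"
  unfolding vect_mor_def
proof (intro conjI ballI impI)
  fix C assume "C \<in> V"
  then show "mact a C \<in> V"
    by (elim carrier_classE) (simp add: mact_class[OF a] class_in_carrier PEe_closed[OF a])
next
  show "mact a Z = Z"
    unfolding tens_zero_def using mact_class[OF a] a by simp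
next
  fix g C assume "g \<in> carrier G" "C \<in> V"
  then show "mact a (gact g C) = gact g (mact a C)"
    by (elim carrier_classE) (simp add: mact_class[OF a] gact_class P_iota_comm[OF a] PEe_Pset)
next
  fix C1 C2 assume C1: "C1 \<in> V" and C2: "C2 \<in> V" and collapse: "mact a C1 = mact a C2 \<and> mact a C1 \<noteq> Z"
  obtain x1 w1 x2 w2 where x1: "x1 \<in> Pe" "w1 \<in> W" "C1 = rel `` {(x1, w1)}"
    and x2: "x2 \<in> Pe" "w2 \<in> W" "C2 = rel `` {(x2, w2)}"
    using C1 C2 by (elim carrier_classE)
  have m1: "mact a C1 = rel `` {(a \<cdot> x1, w1)}" and m2: "mact a C2 = rel `` {(a \<cdot> x2, w2)}"
    using x1(3) x2(3) mact_class[OF a] by simp_all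
  have "rel `` {(a \<cdot> x1, w1)} = rel `` {(a \<cdot> x2, w2)}" "rel `` {(a \<cdot> x1, w1)} \<noteq> Z"
    using collapse unfolding m1 m2 by blast+
  then obtain h where h: "h \<in> carrier G" "rel `` {(x1, w1)} = rel `` {(\<iota> h \<cdot> x2, w2)}"
    using mact_eq_imp_translate[OF a x1(1,2) x2(1,2)] by blast
  then have h: "h \<in> carrier G" "C1 = gact h C2"
    using gact_class x1(3) x2(3) by simp_all
  have "(\<lambda>g. gact g (gact h C2)) ` carrier G = (\<lambda>g. gact g C2) ` carrier G"
    by (rule group.orbit_translate[OF group_G h(1)]) (rule gact_comp[OF _ h(1) C2])
  then show "(\<lambda>g. gact g C1) ` carrier G = (\<lambda>g. gact g C2) ` carrier G"
    using h(2) by simp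
qed

lemma tensor_rep_obj: "rep_obj G M zM \<iota> V Z gact mact"
  unfolding rep_obj_def
proof (intro conjI ballI)
  show "vect_obj G V Z gact"
    by (rule tensor_vect_obj)
  show "vect_mor G V Z gact V Z gact (mact a)" if "a \<in> carrier M" for a
    using tensor_vect_mor[OF that] .
next
  fix C assume "C \<in> V"
  then show "mact \<one> C = C"
    by (elim carrier_classE) (simp add: mact_class P_one PEe_Pset)
next
  fix a b C assume "a \<in> carrier M" "b \<in> carrier M" "C \<in> V"
  then show "mact (a \<otimes> b) C = mact a (mact b C)"
    by (elim carrier_classE) (simp add: mact_class P_comp PEe_Pset)
next
  fix C assume "C \<in> V"
  then show "mact zM C = Z"
    by (elim carrier_classE)
      (simp add: mact_class PEe_carrier tens_zero_def class_eq_iff gen_rel_converse gen_zero PEe_eq)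
next
  fix g C assume "g \<in> carrier G" "C \<in> V"
  then show "mact (\<iota> g) C = gact g C"
    unfolding tens_gact_def tens_mact_def by simp
qed

end

theorem mainTheorem9:
  fixes G :: "('g,'c) monoid_scheme" and M :: "('m,'d) monoid_scheme"
    and zM :: 'm and \<iota> :: "'g \<Rightarrow> 'm" and e :: 'm
    and W :: "'w set" and zW :: 'w and act :: "'g \<Rightarrow> 'w \<Rightarrow> 'w" and \<sigma> :: "'m \<Rightarrow> 'w \<Rightarrow> 'w"
  assumes "comm_group G" and "finite (carrier G)"
    and "hatG_linear_monoid G M zM \<iota>"
    and "left_inductive G M zM \<iota>"
    and "e \<in> carrier M" and "e \<otimes>\<^bsub>M\<^esub> e = e" and "e \<noteq> zM"
    and "repGJ_obj G M zM \<iota> e W zW act \<sigma>"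
  shows "rep_obj G M zM \<iota>
           (tens_carrier G M zM \<iota> e W zW act \<sigma>)
           (tens_zero G M zM \<iota> e W zW act \<sigma>)
           (tens_gact G M zM \<iota> e W zW act \<sigma>)
           (tens_mact G M zM \<iota> e W zW act \<sigma>)"
proof -
  have "monoid M" "finite (carrier M)"
    using assms(3) unfolding hatG_linear_monoid_def by auto
  then interpret induced_rep G M zM \<iota> e W zW act \<sigma>
    using assms(3-8)
    by (simp add: induced_rep_def induced_rep_axioms_def idempotent_J_class_def
        idempotent_J_class_axioms_def)
  show ?thesis
    by (rule tensor_rep_obj)
qed

end
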